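(* For every graph $G$, $\widehat{\Theta}(G)=\rho_T(G)=\rho_{\widehat{T}}(\overline{G})=\Theta(\overline{G})$, where $\overline{G}$ is the complement of $G$.
   Context: Graphs are finite and simple. A graph $G=(V,E)$ is a threshold graph if there exist weights $w:V\to\mathbb{R}$ and a real number $s$ such that for all distinct $i,j\in V$: $w(i)+w(j)\ge s$ iff $ij\in E$. $\Theta(G)$ is the least $k\ge 1$ such that there exist threshold graphs $(V,E_1),\dots,(V,E_k)$ with each $E_i\subseteq E$ and $\bigcup_i E_i=E$. $\widehat{\Theta}(G)$ is the least $k\ge1$ such that there exist threshold graphs $(V,E_1),\dots,(V,E_k)$ with $\bigcap_i E_i=E$. Min-plus dot product: $u\odot v=\min_i(u_i+v_i)$ on $(\mathbb{R}\cup\{\infty\})^k$; max-plus dot product: $u\,\widehat{\odot}\,v=\max_i(u_i+v_i)$ on $(\mathbb{R}\cup\{-\infty\})^k$. A min-plus (resp. max-plus) $k$-tropical dot product representation of $G$ is a map $f$ from $V$ to $(\mathbb{R}\cup\{\infty\})^k$ (resp. $(\mathbb{R}\cup\{-\infty\})^k$) with threshold $t>0$ such that for distinct $x,y$: $xy\in E$ iff $f(x)\odot f(y)\ge t$ (resp. $f(x)\,\widehat{\odot}\,f(y)\ge t$). $\rho_T(G)$ (resp. $\rho_{\widehat T}(G)$) is the least $k\ge 1$ for which such a min-plus (resp. max-plus) representation exists. *)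

theory Defs
  imports Complex_Main "HOL-Library.Extended_Real"
begin

definition graph :: "'a set \<Rightarrow> 'a set set \<Rightarrow> bool" where
  "graph V E \<longleftrightarrow> finite V \<and> (\<forall>e\<in>E. \<exists>x y. x \<in> V \<and> y \<in> V \<and> x \<noteq> y \<and> e = {x, y})"

definition complement :: "'a set \<Rightarrow> 'a set set \<Rightarrow> 'a set set" where
  "complement V E = {{x, y} | x y. x \<in> V \<and> y \<in> V \<and> x \<noteq> y \<and> {x, y} \<notin> E}"

definition threshold_graph :: "'a set \<Rightarrow> 'a set set \<Rightarrow> bool" where
  "threshold_graph V E \<longleftrightarrow> graph V E \<and>
     (\<exists>(w :: 'a \<Rightarrow> real) (s :: real). \<forall>i\<in>V. \<forall>j\<in>V. i \<noteq> j \<longrightarrow>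
        (w i + w j \<ge> s \<longleftrightarrow> {i, j} \<in> E))"

definition Theta :: "'a set \<Rightarrow> 'a set set \<Rightarrow> nat" where
  "Theta V E = (LEAST k. k \<ge> 1 \<and> (\<exists>Es :: nat \<Rightarrow> 'a set set.
      (\<forall>i<k. threshold_graph V (Es i) \<and> Es i \<subseteq> E) \<and> (\<Union>i<k. Es i) = E))"

definition Theta_hat :: "'a set \<Rightarrow> 'a set set \<Rightarrow> nat" where
  "Theta_hat V E = (LEAST k. k \<ge> 1 \<and> (\<exists>Es :: nat \<Rightarrow> 'a set set.
      (\<forall>i<k. threshold_graph V (Es i)) \<and> (\<Inter>i<k. Es i) = E))"

text \<open>Vectors in (R \<union> {\<infinity>})^k resp. (R \<union> {-\<infinity>})^k are functions nat \<Rightarrow> ereal,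
  indexed by i < k.\<close>
definition min_plus_dot :: "nat \<Rightarrow> (nat \<Rightarrow> ereal) \<Rightarrow> (nat \<Rightarrow> ereal) \<Rightarrow> ereal" where
  "min_plus_dot k u v = Min ((\<lambda>i. u i + v i) ` {..<k})"

definition max_plus_dot :: "nat \<Rightarrow> (nat \<Rightarrow> ereal) \<Rightarrow> (nat \<Rightarrow> ereal) \<Rightarrow> ereal" where
  "max_plus_dot k u v = Max ((\<lambda>i. u i + v i) ` {..<k})"

definition min_plus_rep :: "'a set \<Rightarrow> 'a set set \<Rightarrow> nat \<Rightarrow> ('a \<Rightarrow> nat \<Rightarrow> ereal) \<Rightarrow> real \<Rightarrow> bool" where
  "min_plus_rep V E k f t \<longleftrightarrow> t > 0 \<and> (\<forall>x\<in>V. \<forall>i<k. f x i \<noteq> -\<infinity>) \<and>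
     (\<forall>x\<in>V. \<forall>y\<in>V. x \<noteq> y \<longrightarrow> ({x, y} \<in> E \<longleftrightarrow> min_plus_dot k (f x) (f y) \<ge> ereal t))"

definition max_plus_rep :: "'a set \<Rightarrow> 'a set set \<Rightarrow> nat \<Rightarrow> ('a \<Rightarrow> nat \<Rightarrow> ereal) \<Rightarrow> real \<Rightarrow> bool" where
  "max_plus_rep V E k f t \<longleftrightarrow> t > 0 \<and> (\<forall>x\<in>V. \<forall>i<k. f x i \<noteq> \<infinity>) \<and>
     (\<forall>x\<in>V. \<forall>y\<in>V. x \<noteq> y \<longrightarrow> ({x, y} \<in> E \<longleftrightarrow> max_plus_dot k (f x) (f y) \<ge> ereal t))"

definition rho_T :: "'a set \<Rightarrow> 'a set set \<Rightarrow> nat" where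
  "rho_T V E = (LEAST k. k \<ge> 1 \<and> (\<exists>f t. min_plus_rep V E k f t))"

definition rho_T_hat :: "'a set \<Rightarrow> 'a set set \<Rightarrow> nat" where
  "rho_T_hat V E = (LEAST k. k \<ge> 1 \<and> (\<exists>f t. max_plus_rep V E k f t))"

end

theory Submission
  imports Defs
begin

text \<open>The complement of a threshold graph is again a threshold graph (negate the weights and
  move the threshold into the gap below it), so E is an intersection of k threshold graphs iff
  its complement is a union of k threshold subgraphs. A k-dimensional min-plus representation
  states k threshold conditions that must all hold, a max-plus representation k conditions of
  which one must hold; each coordinate is a threshold graph once its infinite entries are
  replaced by a real weight large enough to decide every comparison in the same way.\<close>

definition threshold_edges :: "'a set \<Rightarrow> ('a \<Rightarrow> real) \<Rightarrow> real \<Rightarrow> 'a set set" where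
  "threshold_edges V w s = {{x, y} | x y. x \<in> V \<and> y \<in> V \<and> x \<noteq> y \<and> s \<le> w x + w y}"

lemma mem_threshold_edges:
  assumes "x \<in> V" "y \<in> V" "x \<noteq> y"
  shows "{x, y} \<in> threshold_edges V w s \<longleftrightarrow> s \<le> w x + w y"
  using assms unfolding threshold_edges_def by (auto simp: doubleton_eq_iff add.commute)

lemma mem_complement:
  assumes "x \<in> V" "y \<in> V" "x \<noteq> y"
  shows "{x, y} \<in> complement V X \<longleftrightarrow> {x, y} \<notin> X"
  using assms unfolding complement_def by auto

lemma graph_finite: "graph V E \<Longrightarrow> finite V"
  unfolding graph_def by blast

lemma graph_subset: "graph V E \<Longrightarrow> F \<subseteq> E \<Longrightarrow> graph V F"
  unfolding graph_def by blast

lemma graph_complement: "finite V \<Longrightarrow> graph V (complement V X)"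
  unfolding graph_def complement_def by blast

lemma graph_threshold_edges: "finite V \<Longrightarrow> graph V (threshold_edges V w s)"
  unfolding graph_def threshold_edges_def by blast

lemma graph_INT: "j \<in> I \<Longrightarrow> graph V (Es j) \<Longrightarrow> graph V (\<Inter>i\<in>I. Es i)"
  by (erule graph_subset) (rule INT_lower)

lemma graph_UN: "finite V \<Longrightarrow> (\<And>i. i \<in> I \<Longrightarrow> graph V (Es i)) \<Longrightarrow> graph V (\<Union>i\<in>I. Es i)"
  unfolding graph_def by fastforce

lemma graph_eqI:
  assumes "graph V A" "graph V B"
    and "\<And>x y. x \<in> V \<Longrightarrow> y \<in> V \<Longrightarrow> x \<noteq> y \<Longrightarrow> {x, y} \<in> A \<longleftrightarrow> {x, y} \<in> B"
  shows "A = B"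
proof (intro set_eqI iffI)
  fix e assume "e \<in> A"
  moreover from this obtain x y where "x \<in> V" "y \<in> V" "x \<noteq> y" "e = {x, y}"
    using assms(1) unfolding graph_def by blast
  ultimately show "e \<in> B"
    using assms(3) by simp
next
  fix e assume "e \<in> B"
  moreover from this obtain x y where "x \<in> V" "y \<in> V" "x \<noteq> y" "e = {x, y}"
    using assms(2) unfolding graph_def by blast
  ultimately show "e \<in> A"
    using assms(3) by simp
qed

lemma complement_complement:
  assumes "graph V E"
  shows "complement V (complement V E) = E"
proof (rule graph_eqI)
  show "graph V (complement V (complement V E))"
    using assms by (intro graph_complement graph_finite)
  show "{x, y} \<in> complement V (complement V E) \<longleftrightarrow> {x, y} \<in> E"
    if "x \<in> V" "y \<in> V" "x \<noteq> y" for x y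
    using that by (simp add: mem_complement)
qed (fact assms)

lemma complement_Inter: "complement V (\<Inter>i\<in>I. Es i) = (\<Union>i\<in>I. complement V (Es i))"
  unfolding complement_def by blast

lemma complement_antimono: "E \<subseteq> F \<Longrightarrow> complement V F \<subseteq> complement V E"
  unfolding complement_def by blast

lemma threshold_graph_iff:
  "threshold_graph V E \<longleftrightarrow> finite V \<and> (\<exists>w s. E = threshold_edges V w s)"
proof
  assume "threshold_graph V E"
  then have G: "graph V E"
    and "\<exists>(w :: 'a \<Rightarrow> real) (s :: real).
      \<forall>i\<in>V. \<forall>j\<in>V. i \<noteq> j \<longrightarrow> (s \<le> w i + w j \<longleftrightarrow> {i, j} \<in> E)"
    unfolding threshold_graph_def by simp_all
  then obtain w :: "'a \<Rightarrow> real" and s :: real where ws: "\<forall>i\<in>V. \<forall>j\<in>V. i \<noteq> j \<longrightarrow> (s \<le> w i + w j \<longleftrightarrow> {i, j} \<in> E)"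
    by blast
  have "E = threshold_edges V w s"
  proof (rule graph_eqI)
    show "graph V (threshold_edges V w s)"
      using G by (intro graph_threshold_edges graph_finite)
    show "{x, y} \<in> E \<longleftrightarrow> {x, y} \<in> threshold_edges V w s"
      if "x \<in> V" "y \<in> V" "x \<noteq> y" for x y
      using that ws by (simp add: mem_threshold_edges)
  qed (fact G)
  with G show "finite V \<and> (\<exists>w s. E = threshold_edges V w s)"
    using graph_finite by blast
next
  assume "finite V \<and> (\<exists>w s. E = threshold_edges V w s)"
  then obtain w s where "finite V" "E = threshold_edges V w s"
    by blast
  then show "threshold_graph V E"
    unfolding threshold_graph_def
    by (auto simp: graph_threshold_edges mem_threshold_edges intro!: exI[of _ w] exI[of _ s])
qed

lemma threshold_graph_graph: "threshold_graph V E \<Longrightarrow> graph V E"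
  unfolding threshold_graph_def by blast

lemma finite_threshold_gap:
  fixes g :: "'a \<Rightarrow> real"
  assumes "finite V"
  obtains m where "m < s" "\<And>x. x \<in> V \<Longrightarrow> g x < s \<longleftrightarrow> g x \<le> m"
proof -
  define B where "B = {g x | x. x \<in> V \<and> g x < s}"
  define m where "m = (if B = {} then s - 1 else Max B)"
  have "finite B"
    unfolding B_def using assms by simp
  have "m < s"
    using \<open>finite B\<close> Max_in[of B] unfolding m_def B_def by auto
  moreover have "g x \<le> m" if "x \<in> V" "g x < s" for x
  proof -
    have "g x \<in> B"
      using that unfolding B_def by blast
    then show ?thesis
      using \<open>finite B\<close> unfolding m_def by auto
  qed
  ultimately show thesis
    using that by force
qed

lemma threshold_graph_complement:
  assumes "threshold_graph V E"
  shows "threshold_graph V (complement V E)"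
proof -
  obtain w s where fin: "finite V" and E: "E = threshold_edges V w s"
    using assms threshold_graph_iff by blast
  obtain m where "m < s"
    and m: "\<And>p. p \<in> V \<times> V \<Longrightarrow> w (fst p) + w (snd p) < s \<longleftrightarrow> w (fst p) + w (snd p) \<le> m"
    using finite_threshold_gap[of "V \<times> V" s "\<lambda>p. w (fst p) + w (snd p)"] fin by blast
  have "complement V E = threshold_edges V (\<lambda>x. - w x) (- m)"
  proof (rule graph_eqI)
    show "{x, y} \<in> complement V E \<longleftrightarrow> {x, y} \<in> threshold_edges V (\<lambda>x. - w x) (- m)"
      if "x \<in> V" "y \<in> V" "x \<noteq> y" for x y
      using that m[of "(x, y)"] by (auto simp: E mem_complement mem_threshold_edges)
  qed (use fin graph_complement graph_threshold_edges in auto)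
  then show ?thesis
    using fin threshold_graph_iff by blast
qed

lemma threshold_Inter_iff_complement_threshold_Union:
  fixes k :: nat
  assumes "graph V E" and "1 \<le> k"
  shows "(\<exists>Es. (\<forall>i<k. threshold_graph V (Es i)) \<and> (\<Inter>i<k. Es i) = E) \<longleftrightarrow>
    (\<exists>Fs. (\<forall>i<k. threshold_graph V (Fs i) \<and> Fs i \<subseteq> complement V E) \<and> (\<Union>i<k. Fs i) = complement V E)"
proof
  assume "\<exists>Es. (\<forall>i<k. threshold_graph V (Es i)) \<and> (\<Inter>i<k. Es i) = E"
  then obtain Es where Es: "\<forall>i<k. threshold_graph V (Es i)" "(\<Inter>i<k. Es i) = E"
    by blast
  have union: "(\<Union>i<k. complement V (Es i)) = complement V E"
    unfolding Es(2)[symmetric] complement_Inter ..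
  have "E \<subseteq> Es i" if "i < k" for i
    using Es(2) that by blast
  then have "\<forall>i<k. threshold_graph V (complement V (Es i)) \<and> complement V (Es i) \<subseteq> complement V E"
    using Es(1) by (simp add: threshold_graph_complement complement_antimono)
  with union show "\<exists>Fs. (\<forall>i<k. threshold_graph V (Fs i) \<and> Fs i \<subseteq> complement V E) \<and> (\<Union>i<k. Fs i) = complement V E"
    by (intro exI[of _ "\<lambda>i. complement V (Es i)"] conjI)
next
  assume "\<exists>Fs. (\<forall>i<k. threshold_graph V (Fs i) \<and> Fs i \<subseteq> complement V E) \<and> (\<Union>i<k. Fs i) = complement V E"
  then obtain Fs where Fs: "\<forall>i<k. threshold_graph V (Fs i)" "(\<Union>i<k. Fs i) = complement V E"
    by blast
  have "graph V (\<Inter>i<k. complement V (Fs i))"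
    by (rule graph_INT[of 0]) (use assms in \<open>simp_all add: graph_complement graph_finite\<close>)
  moreover have "complement V (\<Inter>i<k. complement V (Fs i)) = complement V E"
    unfolding complement_Inter Fs(2)[symmetric]
    using Fs(1) by (auto intro!: SUP_cong[OF refl] complement_complement threshold_graph_graph)
  ultimately have inter: "(\<Inter>i<k. complement V (Fs i)) = E"
    using assms(1) by (metis complement_complement)
  have "\<forall>i<k. threshold_graph V (complement V (Fs i))"
    using Fs(1) threshold_graph_complement by blast
  with inter show "\<exists>Es. (\<forall>i<k. threshold_graph V (Es i)) \<and> (\<Inter>i<k. Es i) = E"
    by (intro exI[of _ "\<lambda>i. complement V (Fs i)"] conjI)
qed

lemma min_plus_dot_ge_iff:
  "1 \<le> k \<Longrightarrow> c \<le> min_plus_dot k u v \<longleftrightarrow> (\<forall>i<k. c \<le> u i + v i)"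
  unfolding min_plus_dot_def by (subst Min_ge_iff) (auto simp: lessThan_empty_iff)

lemma max_plus_dot_ge_iff:
  "1 \<le> k \<Longrightarrow> c \<le> max_plus_dot k u v \<longleftrightarrow> (\<exists>i<k. c \<le> u i + v i)"
  unfolding max_plus_dot_def by (subst Max_ge_iff) (auto simp: lessThan_empty_iff)

lemma ereal_weights_realizable:
  fixes h :: "'a \<Rightarrow> ereal"
  assumes "finite V" and "(\<forall>x\<in>V. h x \<noteq> -\<infinity>) \<or> (\<forall>x\<in>V. h x \<noteq> \<infinity>)"
  obtains w :: "'a \<Rightarrow> real" where "\<And>x y. x \<in> V \<Longrightarrow> y \<in> V \<Longrightarrow> ereal t \<le> h x + h y \<longleftrightarrow> t \<le> w x + w y"
proof -
  define S where "S = (\<Sum>x\<in>V. \<bar>real_of_ereal (h x)\<bar>)"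
  define M where "M = \<bar>t\<bar> + 1 + S"
  have bound: "\<bar>real_of_ereal (h x)\<bar> \<le> S" if "x \<in> V" for x
    unfolding S_def using that assms(1) by (intro member_le_sum abs_ge_zero)
  \<comment> \<open>\<open>\<plusminus>M\<close> outweighs every finite pair sum and the threshold, so it decides each comparison
    in which it occurs as the infinite value did; the hypothesis excludes \<open>\<infinity> + -\<infinity>\<close>.\<close>
  define w where "w x = (if h x = \<infinity> then M else if h x = -\<infinity> then - M else real_of_ereal (h x))" for x
  show thesis
  proof (rule that)
    fix x y assume "x \<in> V" "y \<in> V"
    with assms(2) bound[of x] bound[of y] show "ereal t \<le> h x + h y \<longleftrightarrow> t \<le> w x + w y"
      by (cases "h x"; cases "h y") (auto simp: w_def M_def)
  qed
qed

lemma ereal_coordinate_weights_realizable: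
  fixes f :: "'a \<Rightarrow> nat \<Rightarrow> ereal"
  assumes "finite V" and "\<forall>i<k. (\<forall>x\<in>V. f x i \<noteq> -\<infinity>) \<or> (\<forall>x\<in>V. f x i \<noteq> \<infinity>)"
  obtains W :: "nat \<Rightarrow> 'a \<Rightarrow> real"
  where "\<And>i x y. i < k \<Longrightarrow> x \<in> V \<Longrightarrow> y \<in> V \<Longrightarrow> ereal t \<le> f x i + f y i \<longleftrightarrow> t \<le> W i x + W i y"
proof -
  have "\<forall>i. \<exists>w :: 'a \<Rightarrow> real. i < k \<longrightarrow> (\<forall>x\<in>V. \<forall>y\<in>V. ereal t \<le> f x i + f y i \<longleftrightarrow> t \<le> w x + w y)"
  proof
    fix i
    show "\<exists>w :: 'a \<Rightarrow> real. i < k \<longrightarrow> (\<forall>x\<in>V. \<forall>y\<in>V. ereal t \<le> f x i + f y i \<longleftrightarrow> t \<le> w x + w y)"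
    proof (cases "i < k")
      case True
      with assms obtain w :: "'a \<Rightarrow> real"
        where "\<And>x y. x \<in> V \<Longrightarrow> y \<in> V \<Longrightarrow> ereal t \<le> f x i + f y i \<longleftrightarrow> t \<le> w x + w y"
        using ereal_weights_realizable[of V "\<lambda>x. f x i"] by metis
      then show ?thesis by auto
    qed simp
  qed
  from choice[OF this] obtain W where
    "\<forall>i. i < k \<longrightarrow> (\<forall>x\<in>V. \<forall>y\<in>V. ereal t \<le> f x i + f y i \<longleftrightarrow> t \<le> W i x + W i y)" ..
  then show thesis
    using that by simp
qed

lemma threshold_graphs_ereal_coordinates:
  assumes "\<forall>i<k. threshold_graph V (Es i)"
  obtains f :: "'a \<Rightarrow> nat \<Rightarrow> ereal" where "\<And>x i. \<bar>f x i\<bar> \<noteq> \<infinity>"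
    and "\<And>i x y. i < k \<Longrightarrow> x \<in> V \<Longrightarrow> y \<in> V \<Longrightarrow> x \<noteq> y \<Longrightarrow> {x, y} \<in> Es i \<longleftrightarrow> 1 \<le> f x i + f y i"
proof -
  have "\<forall>i. \<exists>p :: ('a \<Rightarrow> real) \<times> real. i < k \<longrightarrow> Es i = threshold_edges V (fst p) (snd p)"
  proof
    fix i
    show "\<exists>p :: ('a \<Rightarrow> real) \<times> real. i < k \<longrightarrow> Es i = threshold_edges V (fst p) (snd p)"
    proof (cases "i < k")
      case True
      then obtain w s where "Es i = threshold_edges V w s"
        using assms threshold_graph_iff by meson
      then show ?thesis
        by (intro exI[of _ "(w, s)"]) simp
    qed simp
  qed
  from choice[OF this] obtain P :: "nat \<Rightarrow> ('a \<Rightarrow> real) \<times> real"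
    where P: "\<forall>i. i < k \<longrightarrow> Es i = threshold_edges V (fst (P i)) (snd (P i))" ..
  \<comment> \<open>Shift each weight by \<open>(1 - s\<^sub>i) / 2\<close>, moving every threshold to 1.\<close>
  show thesis
  proof (rule that[of "\<lambda>x i. ereal (fst (P i) x + (1 - snd (P i)) / 2)"])
    show "{x, y} \<in> Es i \<longleftrightarrow> 1 \<le> ereal (fst (P i) x + (1 - snd (P i)) / 2) + ereal (fst (P i) y + (1 - snd (P i)) / 2)"
      if "i < k" "x \<in> V" "y \<in> V" "x \<noteq> y" for i x y
      using that by (auto simp: P mem_threshold_edges field_simps)
  qed simp
qed

lemma min_plus_rep_iff_threshold_Inter:
  fixes k :: nat
  assumes "graph V E" and "1 \<le> k"
  shows "(\<exists>f t. min_plus_rep V E k f t) \<longleftrightarrow> (\<exists>Es. (\<forall>i<k. threshold_graph V (Es i)) \<and> (\<Inter>i<k. Es i) = E)"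
proof
  have fin: "finite V"
    using assms(1) by (rule graph_finite)
  assume "\<exists>f t. min_plus_rep V E k f t"
  then obtain f t where rep: "min_plus_rep V E k f t"
    by blast
  then have "\<forall>i<k. (\<forall>x\<in>V. f x i \<noteq> -\<infinity>) \<or> (\<forall>x\<in>V. f x i \<noteq> \<infinity>)"
    unfolding min_plus_rep_def by simp
  then obtain W where W: "\<And>i x y. i < k \<Longrightarrow> x \<in> V \<Longrightarrow> y \<in> V \<Longrightarrow> ereal t \<le> f x i + f y i \<longleftrightarrow> t \<le> W i x + W i y"
    using ereal_coordinate_weights_realizable[OF fin, of k f t] by blast
  define Es where "Es i = threshold_edges V (W i) t" for i
  have "\<forall>i<k. threshold_graph V (Es i)"
    unfolding Es_def by (auto simp: threshold_graph_iff fin)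
  moreover have "(\<Inter>i<k. Es i) = E"
  proof (rule graph_eqI)
    show "graph V (\<Inter>i<k. Es i)"
      using assms(2) by (intro graph_INT[of 0]) (simp_all add: Es_def graph_threshold_edges fin)
    show "{x, y} \<in> (\<Inter>i<k. Es i) \<longleftrightarrow> {x, y} \<in> E" if "x \<in> V" "y \<in> V" "x \<noteq> y" for x y
    proof -
      have "{x, y} \<in> (\<Inter>i<k. Es i) \<longleftrightarrow> (\<forall>i<k. t \<le> W i x + W i y)"
        using that by (auto simp: Es_def mem_threshold_edges)
      also have "\<dots> \<longleftrightarrow> (\<forall>i<k. ereal t \<le> f x i + f y i)"
        using W that by simp
      also have "\<dots> \<longleftrightarrow> ereal t \<le> min_plus_dot k (f x) (f y)"
        using assms(2) by (simp add: min_plus_dot_ge_iff)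
      also have "\<dots> \<longleftrightarrow> {x, y} \<in> E"
        using rep that unfolding min_plus_rep_def by simp
      finally show ?thesis .
    qed
  qed (fact assms(1))
  ultimately show "\<exists>Es. (\<forall>i<k. threshold_graph V (Es i)) \<and> (\<Inter>i<k. Es i) = E"
    by (intro exI[of _ Es] conjI)
next
  assume "\<exists>Es. (\<forall>i<k. threshold_graph V (Es i)) \<and> (\<Inter>i<k. Es i) = E"
  then obtain Es where Es: "\<forall>i<k. threshold_graph V (Es i)" "(\<Inter>i<k. Es i) = E"
    by blast
  obtain f :: "'a \<Rightarrow> nat \<Rightarrow> ereal" where finite_f: "\<And>x i. \<bar>f x i\<bar> \<noteq> \<infinity>"
    and f: "\<And>i x y. i < k \<Longrightarrow> x \<in> V \<Longrightarrow> y \<in> V \<Longrightarrow> x \<noteq> y \<Longrightarrow> {x, y} \<in> Es i \<longleftrightarrow> 1 \<le> f x i + f y i"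
    using threshold_graphs_ereal_coordinates[OF Es(1)] by blast
  have "min_plus_rep V E k f 1"
    unfolding min_plus_rep_def
  proof (intro conjI ballI allI impI)
    show "f x i \<noteq> -\<infinity>" for x i
      using finite_f[of x i] by auto
    fix x y assume xy: "x \<in> V" "y \<in> V" "x \<noteq> y"
    have "{x, y} \<in> E \<longleftrightarrow> (\<forall>i<k. {x, y} \<in> Es i)"
      unfolding Es(2)[symmetric] by auto
    also have "\<dots> \<longleftrightarrow> (\<forall>i<k. 1 \<le> f x i + f y i)"
      using f xy by simp
    also have "\<dots> \<longleftrightarrow> ereal 1 \<le> min_plus_dot k (f x) (f y)"
      using assms(2) by (simp add: min_plus_dot_ge_iff one_ereal_def)
    finally show "{x, y} \<in> E \<longleftrightarrow> ereal 1 \<le> min_plus_dot k (f x) (f y)" .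
  qed simp
  then show "\<exists>f t. min_plus_rep V E k f t"
    by blast
qed

lemma max_plus_rep_iff_threshold_Union:
  fixes k :: nat
  assumes "graph V E" and "1 \<le> k"
  shows "(\<exists>f t. max_plus_rep V E k f t) \<longleftrightarrow>
    (\<exists>Es. (\<forall>i<k. threshold_graph V (Es i) \<and> Es i \<subseteq> E) \<and> (\<Union>i<k. Es i) = E)"
proof
  have fin: "finite V"
    using assms(1) by (rule graph_finite)
  assume "\<exists>f t. max_plus_rep V E k f t"
  then obtain f t where rep: "max_plus_rep V E k f t"
    by blast
  then have "\<forall>i<k. (\<forall>x\<in>V. f x i \<noteq> -\<infinity>) \<or> (\<forall>x\<in>V. f x i \<noteq> \<infinity>)"
    unfolding max_plus_rep_def by simp
  then obtain W where W: "\<And>i x y. i < k \<Longrightarrow> x \<in> V \<Longrightarrow> y \<in> V \<Longrightarrow> ereal t \<le> f x i + f y i \<longleftrightarrow> t \<le> W i x + W i y"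
    using ereal_coordinate_weights_realizable[OF fin, of k f t] by blast
  define Es where "Es i = threshold_edges V (W i) t" for i
  have "(\<Union>i<k. Es i) = E"
  proof (rule graph_eqI)
    show "graph V (\<Union>i<k. Es i)"
      by (rule graph_UN) (simp_all add: Es_def graph_threshold_edges fin)
    show "{x, y} \<in> (\<Union>i<k. Es i) \<longleftrightarrow> {x, y} \<in> E" if "x \<in> V" "y \<in> V" "x \<noteq> y" for x y
    proof -
      have "{x, y} \<in> (\<Union>i<k. Es i) \<longleftrightarrow> (\<exists>i<k. t \<le> W i x + W i y)"
        using that by (auto simp: Es_def mem_threshold_edges)
      also have "\<dots> \<longleftrightarrow> (\<exists>i<k. ereal t \<le> f x i + f y i)"
        using W that by auto
      also have "\<dots> \<longleftrightarrow> ereal t \<le> max_plus_dot k (f x) (f y)"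
        using assms(2) by (simp add: max_plus_dot_ge_iff)
      also have "\<dots> \<longleftrightarrow> {x, y} \<in> E"
        using rep that unfolding max_plus_rep_def by simp
      finally show ?thesis .
    qed
  qed (fact assms(1))
  moreover have "\<forall>i<k. threshold_graph V (Es i) \<and> Es i \<subseteq> (\<Union>i<k. Es i)"
    unfolding Es_def by (auto simp: threshold_graph_iff fin)
  ultimately show "\<exists>Es. (\<forall>i<k. threshold_graph V (Es i) \<and> Es i \<subseteq> E) \<and> (\<Union>i<k. Es i) = E"
    by (intro exI[of _ Es]) simp
next
  assume "\<exists>Es. (\<forall>i<k. threshold_graph V (Es i) \<and> Es i \<subseteq> E) \<and> (\<Union>i<k. Es i) = E"
  then obtain Es where Es: "\<forall>i<k. threshold_graph V (Es i)" "(\<Union>i<k. Es i) = E"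
    by blast
  obtain f :: "'a \<Rightarrow> nat \<Rightarrow> ereal" where finite_f: "\<And>x i. \<bar>f x i\<bar> \<noteq> \<infinity>"
    and f: "\<And>i x y. i < k \<Longrightarrow> x \<in> V \<Longrightarrow> y \<in> V \<Longrightarrow> x \<noteq> y \<Longrightarrow> {x, y} \<in> Es i \<longleftrightarrow> 1 \<le> f x i + f y i"
    using threshold_graphs_ereal_coordinates[OF Es(1)] by blast
  have "max_plus_rep V E k f 1"
    unfolding max_plus_rep_def
  proof (intro conjI ballI allI impI)
    show "f x i \<noteq> \<infinity>" for x i
      using finite_f[of x i] by auto
    fix x y assume xy: "x \<in> V" "y \<in> V" "x \<noteq> y"
    have "{x, y} \<in> E \<longleftrightarrow> (\<exists>i<k. {x, y} \<in> Es i)"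
      unfolding Es(2)[symmetric] by auto
    also have "\<dots> \<longleftrightarrow> (\<exists>i<k. 1 \<le> f x i + f y i)"
      using f xy by auto
    also have "\<dots> \<longleftrightarrow> ereal 1 \<le> max_plus_dot k (f x) (f y)"
      using assms(2) by (simp add: max_plus_dot_ge_iff one_ereal_def)
    finally show "{x, y} \<in> E \<longleftrightarrow> ereal 1 \<le> max_plus_dot k (f x) (f y)" .
  qed simp
  then show "\<exists>f t. max_plus_rep V E k f t"
    by blast
qed

lemma Least_ge_one_cong:
  "(\<And>k. 1 \<le> k \<Longrightarrow> P k \<longleftrightarrow> Q k) \<Longrightarrow> (LEAST k :: nat. 1 \<le> k \<and> P k) = (LEAST k. 1 \<le> k \<and> Q k)"
  by (rule arg_cong[where f = Least]) auto

theorem mainTheorem9: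
  fixes V :: "'a set" and E :: "'a set set"
  assumes "graph V E"
  shows "Theta_hat V E = rho_T V E \<and>
         rho_T V E = rho_T_hat V (complement V E) \<and>
         rho_T_hat V (complement V E) = Theta V (complement V E)"
proof -
  have compl: "graph V (complement V E)"
    using assms by (rule graph_complement[OF graph_finite])
  note Inter = min_plus_rep_iff_threshold_Inter[OF assms]
  note Union = max_plus_rep_iff_threshold_Union[OF compl]
  note duality = threshold_Inter_iff_complement_threshold_Union[OF assms]
  have "Theta_hat V E = rho_T V E"
    unfolding Theta_hat_def rho_T_def by (rule Least_ge_one_cong) (simp add: Inter)
  moreover have "rho_T V E = rho_T_hat V (complement V E)"
    unfolding rho_T_def rho_T_hat_def by (rule Least_ge_one_cong) (simp add: Inter duality Union)
  moreover have "rho_T_hat V (complement V E) = Theta V (complement V E)"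
    unfolding rho_T_hat_def Theta_def by (rule Least_ge_one_cong) (simp add: Union)
  ultimately show ?thesis
    by blast
qed

end
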